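(* Let $K\ge 1$ and $T\ge 1$ be integers, let $\mathcal{K}=\{1,\dots,K\}$ and $\mathcal{T}=\{1,\dots,T\}$, and let prices $p_k(t)>0$ be given for all $k\in\mathcal{K}$, $t\in\mathcal{T}$. Write $S=\sum_{k\in\mathcal{K}}\sum_{t\in\mathcal{T}}p_k(t)$. Fix a user $n$ with parameters $\zeta_n>0$, budget $B_n\ge 0$ and minimum energy requirement $E_n^{\min}\ge 0$, and define $$d_{n,k}(t)=\frac{B_n+\zeta_n S}{KT\,p_k(t)}-\zeta_n,\qquad k\in\mathcal{K},\ t\in\mathcal{T}.$$ Then the demands $d_{n,k}(t)$ are feasible, i.e. they satisfy $d_{n,k}(t)\ge 0$ for all $k\in\mathcal{K}$, $t\in\mathcal{T}$, $\sum_{k\in\mathcal{K}}\sum_{t\in\mathcal{T}}p_k(t)d_{n,k}(t)\le B_n$, and $\sum_{k\in\mathcal{K}}\sum_{t\in\mathcal{T}}d_{n,k}(t)\ge E_n^{\min}$, if and only if $$B_n\ge \max\{f_{n,1},f_{n,2}\},$$ where $$f_{n,1}=\max_{k\in\mathcal{K},\,t\in\mathcal{T}}\zeta_n\bigl(KT\,p_k(t)-S\bigr),\qquad f_{n,2}=\frac{E_n^{\min}+\zeta_n KT}{\sum_{k\in\mathcal{K}}\sum_{t\in\mathcal{T}}\frac{1}{KT\,p_k(t)}}-\zeta_n S.$$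
   Context: This arises in a demand response model with $K$ utility companies announcing prices $p_k(t)$ over $T$ periods; user $n$ chooses demands $d_{n,k}(t)$ to maximize $\gamma_n\sum_{k}\sum_{t}\ln(\zeta_n+d_{n,k}(t))$ subject to the budget constraint $\sum_k\sum_t p_k(t)d_{n,k}(t)\le B_n$, the minimum energy constraint $\sum_k\sum_t d_{n,k}(t)\ge E_n^{\min}$, and nonnegativity $d_{n,k}(t)\ge 0$; the displayed $d_{n,k}(t)$ is the maximizer obtained when the minimum energy constraint is ignored. *)

theory Defs
  imports Complex_Main
begin

definition total_price :: "nat \<Rightarrow> nat \<Rightarrow> (nat \<Rightarrow> nat \<Rightarrow> real) \<Rightarrow> real" where
  "total_price K T p = (\<Sum>k\<in>{1..K}. \<Sum>t\<in>{1..T}. p k t)"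

definition demand :: "nat \<Rightarrow> nat \<Rightarrow> (nat \<Rightarrow> nat \<Rightarrow> real) \<Rightarrow> real \<Rightarrow> real \<Rightarrow> nat \<Rightarrow> nat \<Rightarrow> real" where
  "demand K T p zeta B k t =
     (B + zeta * total_price K T p) / (real K * real T * p k t) - zeta"

definition feasible :: "nat \<Rightarrow> nat \<Rightarrow> (nat \<Rightarrow> nat \<Rightarrow> real) \<Rightarrow> real \<Rightarrow> real \<Rightarrow> (nat \<Rightarrow> nat \<Rightarrow> real) \<Rightarrow> bool" where
  "feasible K T p B Emin d \<longleftrightarrow>
     (\<forall>k\<in>{1..K}. \<forall>t\<in>{1..T}. d k t \<ge> 0) \<and>
     (\<Sum>k\<in>{1..K}. \<Sum>t\<in>{1..T}. p k t * d k t) \<le> B \<and>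
     (\<Sum>k\<in>{1..K}. \<Sum>t\<in>{1..T}. d k t) \<ge> Emin"

definition f1 :: "nat \<Rightarrow> nat \<Rightarrow> (nat \<Rightarrow> nat \<Rightarrow> real) \<Rightarrow> real \<Rightarrow> real" where
  "f1 K T p zeta = Max ((\<lambda>(k, t). zeta * (real K * real T * p k t - total_price K T p)) ` ({1..K} \<times> {1..T}))"

definition f2 :: "nat \<Rightarrow> nat \<Rightarrow> (nat \<Rightarrow> nat \<Rightarrow> real) \<Rightarrow> real \<Rightarrow> real \<Rightarrow> real" where
  "f2 K T p zeta Emin =
     (Emin + zeta * real K * real T) /
       (\<Sum>k\<in>{1..K}. \<Sum>t\<in>{1..T}. 1 / (real K * real T * p k t))
     - zeta * total_price K T p"

end

theory Submission
  imports Defs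
begin

text \<open>Multiplying the demand by its price gives the constant share (B + \<zeta> S)/(KT) minus \<zeta> p,
  so the budget is always spent exactly and feasibility reduces to two conditions: each
  demand is nonnegative (which is the bound by f1) and the total demand, an affine
  increasing function of B with slope \<Sum> 1/(KT p), reaches Emin (which is the bound by f2).\<close>

lemma budget_spent_exactly:
  assumes "K \<ge> 1" and "T \<ge> 1"
    and "\<And>k t. k \<in> {1..K} \<Longrightarrow> t \<in> {1..T} \<Longrightarrow> p k t \<noteq> 0"
  shows "(\<Sum>k\<in>{1..K}. \<Sum>t\<in>{1..T}. p k t * demand K T p zeta B k t) = B"
proof -
  define C where "C = B + zeta * total_price K T p"
  have "(\<Sum>k\<in>{1..K}. \<Sum>t\<in>{1..T}. p k t * demand K T p zeta B k t)
      = (\<Sum>k\<in>{1..K}. \<Sum>t\<in>{1..T}. C / (real K * real T) - zeta * p k t)"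
    using assms(3) by (intro sum.cong refl) (simp add: demand_def C_def field_simps)
  also have "\<dots> = C - zeta * total_price K T p"
    using assms(1,2)
    by (simp add: sum_subtractf sum_distrib_left total_price_def)
  finally show ?thesis by (simp add: C_def)
qed

lemma total_demand_def:
  "(\<Sum>k\<in>{1..K}. \<Sum>t\<in>{1..T}. demand K T p zeta B k t)
     = (B + zeta * total_price K T p) * (\<Sum>k\<in>{1..K}. \<Sum>t\<in>{1..T}. 1 / (real K * real T * p k t))
       - zeta * real K * real T"
  by (simp add: demand_def sum_subtractf sum_distrib_left divide_inverse)

lemma inverse_price_sum_pos:
  assumes "K \<ge> 1" and "T \<ge> 1"
    and "\<And>k t. k \<in> {1..K} \<Longrightarrow> t \<in> {1..T} \<Longrightarrow> p k t > 0"
  shows "(\<Sum>k\<in>{1..K}. \<Sum>t\<in>{1..T}. 1 / (real K * real T * p k t)) > 0"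
  using assms by (intro sum_pos) auto

lemma demand_nonneg_iff:
  assumes "K \<ge> 1" and "T \<ge> 1" and "p k t > 0"
  shows "demand K T p zeta B k t \<ge> 0 \<longleftrightarrow> zeta * (real K * real T * p k t - total_price K T p) \<le> B"
proof -
  have pos: "real K * real T * p k t > 0" using assms by simp
  have "demand K T p zeta B k t \<ge> 0
      \<longleftrightarrow> zeta * (real K * real T * p k t) \<le> B + zeta * total_price K T p"
    using pos by (simp add: demand_def pos_le_divide_eq)
  then show ?thesis by (simp add: algebra_simps)
qed

lemma f1_le_iff:
  assumes "K \<ge> 1" and "T \<ge> 1"
  shows "f1 K T p zeta \<le> B
    \<longleftrightarrow> (\<forall>k\<in>{1..K}. \<forall>t\<in>{1..T}. zeta * (real K * real T * p k t - total_price K T p) \<le> B)"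
  unfolding f1_def using assms by (subst Max_le_iff) auto

lemma f2_le_iff_total_demand:
  assumes "K \<ge> 1" and "T \<ge> 1"
    and "\<And>k t. k \<in> {1..K} \<Longrightarrow> t \<in> {1..T} \<Longrightarrow> p k t > 0"
  shows "f2 K T p zeta Emin \<le> B \<longleftrightarrow> Emin \<le> (\<Sum>k\<in>{1..K}. \<Sum>t\<in>{1..T}. demand K T p zeta B k t)"
proof -
  define H where "H = (\<Sum>k\<in>{1..K}. \<Sum>t\<in>{1..T}. 1 / (real K * real T * p k t))"
  have "H > 0" using inverse_price_sum_pos[OF assms] by (simp add: H_def)
  have "f2 K T p zeta Emin \<le> B
      \<longleftrightarrow> (Emin + zeta * real K * real T) / H \<le> B + zeta * total_price K T p"
    by (simp add: f2_def H_def) linarith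
  also have "\<dots> \<longleftrightarrow> Emin \<le> (B + zeta * total_price K T p) * H - zeta * real K * real T"
    using \<open>H > 0\<close> by (simp add: pos_divide_le_eq algebra_simps)
  finally show ?thesis by (simp only: total_demand_def H_def)
qed

theorem theorem1:
  fixes K T :: nat and p :: "nat \<Rightarrow> nat \<Rightarrow> real" and zeta B Emin :: real
  assumes "K \<ge> 1" and "T \<ge> 1"
    and "\<And>k t. k \<in> {1..K} \<Longrightarrow> t \<in> {1..T} \<Longrightarrow> p k t > 0"
    and "zeta > 0" and "B \<ge> 0" and "Emin \<ge> 0"
  shows "feasible K T p B Emin (demand K T p zeta B)
           \<longleftrightarrow> B \<ge> max (f1 K T p zeta) (f2 K T p zeta Emin)"
proof -
  have nonneg: "(\<forall>k\<in>{1..K}. \<forall>t\<in>{1..T}. demand K T p zeta B k t \<ge> 0) \<longleftrightarrow> f1 K T p zeta \<le> B"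
    using assms(1-3) by (simp add: f1_le_iff demand_nonneg_iff)
  have budget: "(\<Sum>k\<in>{1..K}. \<Sum>t\<in>{1..T}. p k t * demand K T p zeta B k t) = B"
    using assms(1,2) by (rule budget_spent_exactly) (use assms(3) in fastforce)
  show ?thesis
    unfolding feasible_def
    using nonneg budget f2_le_iff_total_demand[OF assms(1-3)] by auto
qed

end
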